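(* Let $X=(\mathbb{R}^n,\|\cdot\|)$ be a real Banach space with an absolute norm and let $\tilde X=(\mathbb{C}^n,\|\cdot\|_{\mathbb{C}})$ be its complexification, $\|(z_1,\dots,z_n)\|_{\mathbb{C}}=\|(|z_1|,\dots,|z_n|)\|$. Then for $x\in X$, $x$ is an extreme point of $B_X$ if and only if $x$ is an extreme point of $B_{\tilde X}$. Moreover, $X$ is a CL-space if and only if $\tilde X$ is a CL-space.
   Context: A norm on $\mathbb{R}^n$ or $\mathbb{C}^n$ is absolute if $\|(a_1,\dots,a_n)\|=\|(|a_1|,\dots,|a_n|)\|$ for all scalars $a_j$ and $\|e_1\|=\dots=\|e_n\|=1$ for the canonical basis $\{e_j\}$. A point $x\in B_Z$ is an extreme point if $y+z=2x$ with $y,z\in B_Z$ implies $x=y=z$. A real or complex Banach space is a CL-space if its unit ball is the absolutely convex hull of every maximal convex subset of its unit sphere; for finite-dimensional spaces this is equivalent to $|x^*(x)|=1$ for every extreme point $x^*$ of $B_{X^*}$ and every extreme point $x$ of $B_X$. *)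

theory Defs
  imports "HOL-Analysis.Analysis"
begin

definition absolute_norm :: "(real ^ 'n \<Rightarrow> real) \<Rightarrow> bool" where
  "absolute_norm N \<longleftrightarrow>
     (\<forall>x. 0 \<le> N x) \<and> (\<forall>x. N x = 0 \<longleftrightarrow> x = 0) \<and>
     (\<forall>c x. N (c *s x) = \<bar>c\<bar> * N x) \<and>
     (\<forall>x y. N (x + y) \<le> N x + N y) \<and>
     (\<forall>x. N x = N (\<chi> i. \<bar>x $ i\<bar>)) \<and>
     (\<forall>i. N (axis i 1) = 1)"

definition cplx_norm :: "(real ^ 'n \<Rightarrow> real) \<Rightarrow> complex ^ 'n \<Rightarrow> real" where
  "cplx_norm N z = N (\<chi> i. cmod (z $ i))"

definition cplx_of :: "real ^ 'n \<Rightarrow> complex ^ 'n" where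
  "cplx_of x = (\<chi> i. complex_of_real (x $ i))"

definition ext_pt :: "'a::real_vector set \<Rightarrow> 'a \<Rightarrow> bool" where
  "ext_pt B x \<longleftrightarrow> x \<in> B \<and> (\<forall>y\<in>B. \<forall>z\<in>B. y + z = 2 *\<^sub>R x \<longrightarrow> x = y \<and> x = z)"

definition max_convex_subset :: "'a::real_vector set \<Rightarrow> 'a set \<Rightarrow> bool" where
  "max_convex_subset S F \<longleftrightarrow> convex F \<and> F \<subseteq> S \<and>
     (\<forall>G. convex G \<and> G \<subseteq> S \<and> F \<subseteq> G \<longrightarrow> G = F)"

definition real_aco :: "(real ^ 'n) set \<Rightarrow> (real ^ 'n) set" where
  "real_aco F = convex hull {c *s x | c x. \<bar>c\<bar> \<le> 1 \<and> x \<in> F}"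

definition complex_aco :: "(complex ^ 'n) set \<Rightarrow> (complex ^ 'n) set" where
  "complex_aco F = convex hull {c *s x | c x. cmod c \<le> 1 \<and> x \<in> F}"

definition real_CL :: "(real ^ 'n \<Rightarrow> real) \<Rightarrow> bool" where
  "real_CL N \<longleftrightarrow> (\<forall>F. max_convex_subset {x. N x = 1} F \<longrightarrow> {x. N x \<le> 1} = real_aco F)"

definition complex_CL :: "(complex ^ 'n \<Rightarrow> real) \<Rightarrow> bool" where
  "complex_CL N \<longleftrightarrow> (\<forall>F. max_convex_subset {x. N x = 1} F \<longrightarrow> {x. N x \<le> 1} = complex_aco F)"

end

theory Submission
  imports Defs
begin

text \<open>
  For an absolute norm, monotonicity in the moduli of the coordinates gives the
  extreme point correspondence by comparing a complex point with its real part and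
  its moduli.  The CL-property becomes a face condition: every extreme point lies in
  each maximal face up to a unimodular scalar.  Maximal complex faces induce maximal
  real faces via the moduli of their functionals, real faces extend to complex ones,
  and an elementary inequality (\<open>sum_concentrated\<close>), applied to an extreme point and
  its coordinate sign flips, shows that such a functional sees a single coordinate of
  each extreme point.  This transfers the face condition in both directions.
\<close>

lemma ext_pt_iff_extreme_point:
  assumes "convex S"
  shows "ext_pt S x \<longleftrightarrow> x extreme_point_of S"
proof
  assume e: "ext_pt S x"
  show "x extreme_point_of S"
    unfolding extreme_point_of_def
  proof (intro conjI ballI)
    show "x \<in> S" using e by (simp add: ext_pt_def)
    fix a b assume ab: "a \<in> S" "b \<in> S"
    show "x \<notin> open_segment a b"
    proof
      assume "x \<in> open_segment a b"
      then obtain u where u: "a \<noteq> b" "0 < u" "u < 1" "x = (1 - u) *\<^sub>R a + u *\<^sub>R b"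
        by (auto simp: in_segment)
      \<comment> \<open>move symmetrically away from \<open>x\<close> along the segment, staying inside it\<close>
      define d where "d = min u (1 - u)"
      have d: "0 < d" "d \<le> u" "d \<le> 1 - u" using u by (auto simp: d_def)
      define y where "y = x - d *\<^sub>R (b - a)"
      define z where "z = x + d *\<^sub>R (b - a)"
      have "y = (1 - (u - d)) *\<^sub>R a + (u - d) *\<^sub>R b"
        by (simp add: y_def u(4) algebra_simps)
      hence "y \<in> S" using d u ab assms by (auto intro: convexD)
      moreover have "z = (1 - (u + d)) *\<^sub>R a + (u + d) *\<^sub>R b"
        by (simp add: z_def u(4) algebra_simps)
      hence "z \<in> S" using d u ab assms by (auto intro: convexD)
      moreover have "y + z = 2 *\<^sub>R x" by (simp add: y_def z_def algebra_simps scaleR_2)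
      ultimately have "x = y" using e by (auto simp: ext_pt_def)
      thus False using d u by (simp add: y_def)
    qed
  qed
next
  assume e: "x extreme_point_of S"
  have "x = y \<and> x = z" if yz: "y \<in> S" "z \<in> S" "y + z = 2 *\<^sub>R x" for y z
  proof -
    have m: "x = midpoint y z" by (simp add: midpoint_def yz(3))
    have "y = z"
    proof (rule ccontr)
      assume "y \<noteq> z"
      hence "x \<in> open_segment y z" using m by simp
      thus False using e yz by (auto simp: extreme_point_of_def)
    qed
    thus "x = y \<and> x = z" using m by simp
  qed
  thus "ext_pt S x" using e by (auto simp: ext_pt_def extreme_point_of_def)
qed

text \<open>A compact convex set is the convex hull of a subset \<open>S\<close> exactly when \<open>S\<close>
  contains all its extreme points (Krein--Milman and its converse).  This turns the
  CL-property into a statement about extreme points.\<close>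

lemma compact_convex_eq_hull_iff:
  fixes B S :: "'a::euclidean_space set"
  assumes "compact B" "convex B" "S \<subseteq> B"
  shows "B = convex hull S \<longleftrightarrow> {x. x extreme_point_of B} \<subseteq> S"
proof
  assume "B = convex hull S"
  thus "{x. x extreme_point_of B} \<subseteq> S" using extreme_point_of_convex_hull by auto
next
  assume "{x. x extreme_point_of B} \<subseteq> S"
  hence "B \<subseteq> convex hull S"
    using Krein_Milman_Minkowski[OF assms(1,2)] hull_mono by blast
  moreover have "convex hull S \<subseteq> B" using hull_minimal[of S B convex] assms(2,3) by blast
  ultimately show "B = convex hull S" by blast
qed

lemma max_convex_subset_exists:
  fixes S G0 :: "'a::real_vector set"
  assumes "convex G0" "G0 \<subseteq> S"
  shows "\<exists>G. max_convex_subset S G \<and> G0 \<subseteq> G"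
proof -
  define A where "A = {G. convex G \<and> G \<subseteq> S \<and> G0 \<subseteq> G}"
  have "\<exists>U\<in>A. \<forall>X\<in>C. X \<subseteq> U" if C: "C \<in> chains A" for C
  proof (cases "C = {}")
    case True thus ?thesis using assms by (auto simp: A_def)
  next
    case False
    have ch: "C \<subseteq> A" "\<forall>X\<in>C. \<forall>Y\<in>C. X \<subseteq> Y \<or> Y \<subseteq> X"
      using C by (auto simp: chains_def chain_subset_def)
    have "convex (\<Union>C)"
    proof (rule convexI)
      fix x y :: 'a and u v :: real
      assume xy: "x \<in> \<Union>C" "y \<in> \<Union>C" "0 \<le> u" "0 \<le> v" "u + v = 1"
      then obtain Z where Z: "Z \<in> C" "x \<in> Z" "y \<in> Z" using ch(2) by blast
      hence "u *\<^sub>R x + v *\<^sub>R y \<in> Z" using ch(1) xy by (auto simp: A_def intro: convexD)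
      thus "u *\<^sub>R x + v *\<^sub>R y \<in> \<Union>C" using Z by auto
    qed
    hence "\<Union>C \<in> A" using ch(1) False by (auto simp: A_def)
    thus ?thesis by auto
  qed
  then obtain M where M: "M \<in> A" "\<forall>X\<in>A. M \<subseteq> X \<longrightarrow> X = M"
    using Zorn_Lemma2[of A] by blast
  have "max_convex_subset S M"
    unfolding max_convex_subset_def
  proof (intro conjI allI impI)
    show "convex M" "M \<subseteq> S" using M(1) by (auto simp: A_def)
    fix G assume "convex G \<and> G \<subseteq> S \<and> M \<subseteq> G"
    moreover from this have "G \<in> A" using M(1) by (auto simp: A_def)
    ultimately show "G = M" using M(2) by auto
  qed
  thus ?thesis using M(1) by (auto simp: A_def)
qed

text \<open>The norms of
  the theorem (on \<open>\<real>\<^sup>n\<close> and on \<open>\<complex>\<^sup>n\<close> regarded as a real space) are instances.\<close>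

definition is_norm :: "('a::real_vector \<Rightarrow> real) \<Rightarrow> bool" where
  "is_norm p \<longleftrightarrow> (\<forall>c v. p (c *\<^sub>R v) = \<bar>c\<bar> * p v) \<and> (\<forall>v w. p (v + w) \<le> p v + p w)
     \<and> (\<forall>v. p v = 0 \<longrightarrow> v = 0)"

lemma is_norm_scaleR: "is_norm p \<Longrightarrow> p (c *\<^sub>R v) = \<bar>c\<bar> * p v"
  by (simp add: is_norm_def)

lemma is_norm_triangle: "is_norm p \<Longrightarrow> p (v + w) \<le> p v + p w"
  by (simp add: is_norm_def)

lemma is_norm_eq_0: "is_norm p \<Longrightarrow> p v = 0 \<Longrightarrow> v = 0"
  by (simp add: is_norm_def)

lemma is_norm_0: "is_norm p \<Longrightarrow> p 0 = 0"
  using is_norm_scaleR[of p 0 0] by simp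

lemma is_norm_minus: "is_norm p \<Longrightarrow> p (- v) = p v"
  using is_norm_scaleR[of p "-1" v] by simp

lemma is_norm_nonneg: "is_norm p \<Longrightarrow> 0 \<le> p v"
  using is_norm_triangle[of p v "-v"] is_norm_minus[of p v] is_norm_0[of p] by simp

lemma is_norm_convex_on:
  assumes p: "is_norm p" shows "convex_on UNIV p"
proof (rule convex_onI)
  fix t :: real and v w assume "0 < t" "t < 1"
  thus "p ((1 - t) *\<^sub>R v + t *\<^sub>R w) \<le> (1 - t) * p v + t * p w"
    using is_norm_triangle[OF p, of "(1 - t) *\<^sub>R v" "t *\<^sub>R w"] by (simp add: is_norm_scaleR[OF p])
qed simp

lemma convex_on_sublevel_le:
  assumes "convex_on UNIV f" shows "convex {v. f v \<le> r}"
proof (rule convexI)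
  fix x y and u v :: real assume "x \<in> {v. f v \<le> r}" "y \<in> {v. f v \<le> r}" "0 \<le> u" "0 \<le> v" "u + v = 1"
  thus "u *\<^sub>R x + v *\<^sub>R y \<in> {v. f v \<le> r}"
    using convex_lower[OF assms, of x y u v] by simp
qed

lemma convex_on_sublevel_less:
  assumes "convex_on UNIV f" shows "convex {v. f v < r}"
proof (rule convexI)
  fix x y and u v :: real assume "x \<in> {v. f v < r}" "y \<in> {v. f v < r}" "0 \<le> u" "0 \<le> v" "u + v = 1"
  thus "u *\<^sub>R x + v *\<^sub>R y \<in> {v. f v < r}"
    using convex_lower[OF assms, of x y u v] by simp
qed

text \<open>If the space contains a unit vector, extreme points of the unit ball lie on
  the unit sphere: a point of norm less than one is the midpoint of its normalization
  and a reflected point, and the origin is the midpoint of \<open>e\<close> and \<open>-e\<close>.\<close>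

lemma ext_pt_unit_sphere:
  assumes p: "is_norm p" and e: "p e = 1" and x: "ext_pt {v. p v \<le> 1} x"
  shows "p x = 1"
proof (rule ccontr)
  assume ne: "p x \<noteq> 1"
  have px: "p x \<le> 1" using x by (simp add: ext_pt_def)
  show False
  proof (cases "x = 0")
    case True
    have "e + (- e) = 2 *\<^sub>R x" using True by simp
    moreover have "p e \<le> 1" "p (-e) \<le> 1" using e is_norm_minus[OF p] by auto
    ultimately have "x = e" using x by (auto simp: ext_pt_def)
    thus False using True e is_norm_0[OF p] by simp
  next
    case False
    hence pos: "0 < p x" using is_norm_nonneg[OF p, of x] is_norm_eq_0[OF p, of x] by force
    have lt: "p x < 1" using px ne by simp
    define y where "y = (1 / p x) *\<^sub>R x"
    define z where "z = (2 - 1 / p x) *\<^sub>R x"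
    have py: "p y = 1" using pos by (simp add: y_def is_norm_scaleR[OF p])
    have "(2 - 1 / p x) * p x = 2 * p x - 1" using pos by (simp add: field_simps)
    hence "p z = \<bar>2 * p x - 1\<bar>" using pos
      by (simp add: z_def is_norm_scaleR[OF p]) (metis abs_mult abs_of_pos)
    hence pz: "p z \<le> 1" using pos lt by auto
    have "y + z = 2 *\<^sub>R x" by (simp add: y_def z_def scaleR_add_left[symmetric])
    hence "x = y" using x py pz by (auto simp: ext_pt_def)
    thus False using py lt by simp
  qed
qed

lemma ext_pt_linear_isometry:
  assumes "linear T" "linear T'" "\<And>v. T' (T v) = v" "\<And>v. T (T' v) = v"
    "\<And>v. p (T v) = p v" "ext_pt {v. p v \<le> 1} x"
  shows "ext_pt {v. p v \<le> 1} (T x)"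
proof -
  interpret T': linear T' by fact
  have pT': "p (T' v) = p v" for v using assms(4,5) by metis
  have "T x = y \<and> T x = z" if yz: "p y \<le> 1" "p z \<le> 1" "y + z = 2 *\<^sub>R T x" for y z
  proof -
    have "T' y + T' z = 2 *\<^sub>R x" using yz(3) assms(3) by (metis T'.add T'.scale)
    moreover have "p (T' y) \<le> 1" "p (T' z) \<le> 1" using pT' yz by auto
    ultimately have "x = T' y \<and> x = T' z" using assms(6) unfolding ext_pt_def by blast
    thus ?thesis using assms(4) by metis
  qed
  thus ?thesis using assms(5,6) by (auto simp: ext_pt_def)
qed

lemma is_norm_compact_ball:
  fixes p :: "'a::euclidean_space \<Rightarrow> real"
  assumes p: "is_norm p" and L: "0 \<le> L" "\<And>v. p v \<le> L * norm v"
    and K: "\<And>v. norm v \<le> K * p v"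
  shows "compact {v. p v \<le> 1}"
proof -
  have "L-lipschitz_on UNIV p"
  proof (rule lipschitz_onI)
    fix x y :: 'a
    have "p x \<le> p y + p (x - y)" "p y \<le> p x + p (x - y)"
      using is_norm_triangle[OF p, of y "x - y"] is_norm_triangle[OF p, of x "y - x"]
        is_norm_minus[OF p, of "x - y"] by simp_all
    hence "\<bar>p x - p y\<bar> \<le> p (x - y)" by linarith
    also have "\<dots> \<le> L * norm (x - y)" by (rule L(2))
    finally show "dist (p x) (p y) \<le> L * dist x y" by (simp add: dist_norm dist_real_def)
  qed (rule L(1))
  hence "continuous_on UNIV p" by (rule lipschitz_on_continuous_on)
  hence "closed {v. p v \<le> 1}" by (rule closed_Collect_le[OF _ continuous_on_const])
  moreover have "bounded {v. p v \<le> 1}"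
    unfolding bounded_iff
  proof (intro exI ballI)
    fix v assume "v \<in> {v. p v \<le> 1}"
    hence "K * p v \<le> \<bar>K\<bar> * 1" using is_norm_nonneg[OF p, of v]
      by (intro mult_mono) auto
    thus "norm v \<le> \<bar>K\<bar>" using K[of v] by linarith
  qed
  ultimately show ?thesis by (simp add: compact_eq_bounded_closed)
qed

text \<open>Functionals dominated by a norm function, and the faces of the unit ball they
  expose.  Maximal convex subsets of the unit sphere are exactly such faces.\<close>

definition dominated :: "('a::real_inner \<Rightarrow> real) \<Rightarrow> 'a \<Rightarrow> bool" where
  "dominated p u \<longleftrightarrow> (\<forall>v. inner u v \<le> p v)"

definition exposed_face :: "('a::real_inner \<Rightarrow> real) \<Rightarrow> 'a \<Rightarrow> 'a set" where
  "exposed_face p u = {v. p v \<le> 1 \<and> inner u v = 1}"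

lemma convex_exposed_face: "is_norm p \<Longrightarrow> convex (exposed_face p u)"
  unfolding exposed_face_def Collect_conj_eq
  by (intro convex_Int convex_on_sublevel_le is_norm_convex_on convex_hyperplane)

lemma exposed_face_sphere: "dominated p u \<Longrightarrow> exposed_face p u \<subseteq> {v. p v = 1}"
  unfolding dominated_def exposed_face_def by (smt (verit) mem_Collect_eq subsetI)

lemma exposed_face_eq_maximal:
  assumes "max_convex_subset {v. p v = 1} F" "is_norm p" "dominated p u"
    "F \<subseteq> exposed_face p u"
  shows "exposed_face p u = F"
  using assms convex_exposed_face exposed_face_sphere unfolding max_convex_subset_def by blast

lemma halfspace_bound_homogeneous:
  assumes p: "is_norm p" and H: "\<And>x. p x < 1 \<Longrightarrow> inner a x \<le> b"
  shows "inner a v \<le> b * p v"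
proof (cases "v = 0")
  case True thus ?thesis using is_norm_0[OF p] by simp
next
  case False
  hence pv: "0 < p v" using is_norm_nonneg[OF p, of v] is_norm_eq_0[OF p, of v] by force
  show ?thesis
  proof (rule field_le_mult_one_interval)
    fix s :: real assume s: "0 < s" "s < 1"
    have "p ((s / p v) *\<^sub>R v) = s" using pv s by (simp add: is_norm_scaleR[OF p])
    hence "inner a ((s / p v) *\<^sub>R v) \<le> b" using s by (intro H) simp
    thus "s * inner a v \<le> b * p v" using pv by (simp add: field_simps)
  qed
qed

lemma supporting_functional:
  fixes p :: "'a::euclidean_space \<Rightarrow> real"
  assumes p: "is_norm p" and C: "convex C" "C \<noteq> {}" "C \<subseteq> {v. p v = 1}"
  shows "\<exists>u. dominated p u \<and> C \<subseteq> exposed_face p u"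
proof -
  define U where "U = {v. p v < 1}"
  have "convex U" unfolding U_def by (intro convex_on_sublevel_less is_norm_convex_on p)
  moreover have "0 \<in> U" using is_norm_0[OF p] by (auto simp: U_def)
  moreover have "U \<inter> C = {}" using C by (auto simp: U_def)
  ultimately obtain a b where ab: "a \<noteq> 0" "\<forall>x\<in>U. inner a x \<le> b" "\<forall>x\<in>C. inner a x \<ge> b"
    using separating_hyperplane_sets[of U C] C by blast
  have bound: "inner a v \<le> b * p v" for v
    by (rule halfspace_bound_homogeneous[OF p]) (use ab(2) in \<open>auto simp: U_def\<close>)
  have "0 < b"
  proof (rule ccontr)
    assume "\<not> 0 < b"
    hence "inner a a \<le> 0" using bound[of a] is_norm_nonneg[OF p, of a]
      by (smt (verit) mult_nonpos_nonneg)
    thus False using ab(1) inner_gt_zero_iff[of a] by linarith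
  qed
  moreover have "inner a c = b" if "c \<in> C" for c
    using bound[of c] ab(3) C(3) that by force
  ultimately have "dominated p ((1 / b) *\<^sub>R a) \<and> C \<subseteq> exposed_face p ((1 / b) *\<^sub>R a)"
    using bound C(3) by (auto simp: dominated_def exposed_face_def field_simps)
  thus ?thesis by blast
qed

lemma max_convex_subset_exposed:
  fixes p :: "'a::euclidean_space \<Rightarrow> real"
  assumes p: "is_norm p" and e: "p e = 1" and F: "max_convex_subset {v. p v = 1} F"
  shows "\<exists>u. dominated p u \<and> F = exposed_face p u"
proof -
  have cF: "convex F" "F \<subseteq> {v. p v = 1}" using F by (auto simp: max_convex_subset_def)
  have "F \<noteq> {}"
  proof
    assume "F = {}"
    hence "{e} = F" using F e convex_singleton[of e] unfolding max_convex_subset_def by blast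
    thus False using \<open>F = {}\<close> by simp
  qed
  then obtain u where "dominated p u" "F \<subseteq> exposed_face p u"
    using supporting_functional[OF p cF(1) _ cF(2)] by blast
  thus ?thesis using exposed_face_eq_maximal[OF F p] by metis
qed

text \<open>Coordinatewise operations on \<open>\<real>\<^sup>n\<close> and \<open>\<complex>\<^sup>n\<close> that an absolute norm cannot see:
  taking moduli, flipping the sign of one coordinate, and rotating each coordinate
  by a complex scalar.\<close>

definition modv :: "complex ^ 'n \<Rightarrow> real ^ 'n" where
  "modv z = (\<chi> k. cmod (z $ k))"

definition flip :: "'n \<Rightarrow> real ^ 'n \<Rightarrow> real ^ 'n" where
  "flip j x = (\<chi> k. if k = j then - x $ k else x $ k)"

definition rot :: "('n \<Rightarrow> complex) \<Rightarrow> complex ^ 'n \<Rightarrow> complex ^ 'n" where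
  "rot q z = (\<chi> k. q k * z $ k)"

lemma modv_nth [simp]: "modv z $ k = cmod (z $ k)"
  by (simp add: modv_def)

lemma flip_nth [simp]: "flip j x $ k = (if k = j then - x $ k else x $ k)"
  by (simp add: flip_def)

lemma rot_nth [simp]: "rot q z $ k = q k * z $ k"
  by (simp add: rot_def)

lemma cplx_of_nth [simp]: "cplx_of x $ k = complex_of_real (x $ k)"
  by (simp add: cplx_of_def)

lemma linear_flip: "linear (flip j)"
  by (rule linearI) (simp_all add: vec_eq_iff algebra_simps)

lemma linear_rot: "linear (rot q)"
  by (rule linearI) (simp_all add: vec_eq_iff algebra_simps scaleR_conv_of_real)

lemma linear_cplx_of: "linear (cplx_of :: real ^ 'n \<Rightarrow> complex ^ 'n)"
proof (rule linearI)
  fix v w :: "real ^ 'n" and r :: real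
  show "cplx_of (v + w) = cplx_of v + cplx_of w" by (simp add: vec_eq_iff)
  show "cplx_of (r *\<^sub>R v) = r *\<^sub>R cplx_of v"
    unfolding vec_eq_iff vector_scaleR_component cplx_of_nth by (simp add: scaleR_conv_of_real)
qed

lemma cnj_mult_unit: "cmod q = 1 \<Longrightarrow> cnj q * q = 1"
  by (metis complex_norm_square mult.commute of_real_1 power_one)

definition phase :: "complex \<Rightarrow> complex" where
  "phase c = (if c = 0 then 1 else sgn c)"

lemma norm_phase [simp]: "cmod (phase c) = 1"
  by (simp add: phase_def norm_sgn)

lemma cnj_phase_mult: "cnj (phase c) * c = complex_of_real (cmod c)"
proof (cases "c = 0")
  case False
  have "cnj c * c = complex_of_real ((cmod c)\<^sup>2)" by (metis complex_norm_square mult.commute)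
  thus ?thesis using False
    by (simp add: phase_def sgn_div_norm scaleR_conv_of_real power2_eq_square field_simps)
qed (simp add: phase_def)

lemma inner_vec_complex: "inner u (w :: complex ^ 'n) = (\<Sum>k\<in>UNIV. Re (cnj (u $ k) * w $ k))"
  by (simp add: inner_vec_def inner_complex_def)

lemma inner_vec_real: "inner f (x :: real ^ 'n) = (\<Sum>k\<in>UNIV. f $ k * x $ k)"
  by (simp add: inner_vec_def)

lemma inner_flip: "inner f (flip j x) = inner f x - 2 * (f $ j * x $ j)"
proof -
  have "inner f (flip j x) = (\<Sum>k\<in>UNIV. f $ k * x $ k - (if k = j then 2 * (f $ j * x $ j) else 0))"
    unfolding inner_vec_real by (intro sum.cong) auto
  thus ?thesis by (simp add: sum_subtractf inner_vec_real)
qed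

lemma Re_cnj_mult_le: "Re (cnj a * b) \<le> cmod a * cmod b"
  by (metis complex_Re_le_cmod complex_mod_cnj norm_mult)

lemma sum_eq_termwise:
  fixes f g :: "'n::finite \<Rightarrow> real"
  assumes "\<And>k. f k \<le> g k" "(\<Sum>k\<in>UNIV. g k) \<le> (\<Sum>k\<in>UNIV. f k)"
  shows "f k = g k"
proof (rule ccontr)
  assume "f k \<noteq> g k"
  hence "(\<Sum>k\<in>UNIV. f k) < (\<Sum>k\<in>UNIV. g k)"
    using assms(1) by (intro sum_strict_mono_ex1) (auto simp: order_less_le)
  thus False using assms(2) by simp
qed

text \<open>It follows from the
  parallelogram law.\<close>

lemma sum_concentrated:
  fixes t :: "'n::finite \<Rightarrow> complex"
  assumes s: "(\<Sum>k\<in>UNIV. cmod (t k)) \<le> 1" and a1: "1 \<le> cmod (\<Sum>k\<in>UNIV. t k)"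
    and a2: "1 \<le> cmod ((\<Sum>k\<in>UNIV. t k) - 2 * t j)" and tj: "t j \<noteq> 0"
  shows "cmod (t j) = 1 \<and> (\<forall>k. k \<noteq> j \<longrightarrow> t k = 0)"
proof -
  define A where "A = (\<Sum>k\<in>UNIV - {j}. t k)"
  define S where "S = (\<Sum>k\<in>UNIV - {j}. cmod (t k))"
  have sumt: "(\<Sum>k\<in>UNIV. t k) = t j + A" by (simp add: A_def sum.remove)
  have sumc: "(\<Sum>k\<in>UNIV. cmod (t k)) = cmod (t j) + S" by (simp add: S_def sum.remove)
  have AS: "cmod A \<le> S" unfolding A_def S_def by (rule norm_sum)
  let ?a = "cmod A" and ?b = "cmod (t j)"
  have b0: "0 < ?b" using tj by simp
  have ab: "?a + ?b \<le> 1" using s sumc AS by linarith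
  have "1 \<le> cmod (A + t j)" "1 \<le> cmod (A - t j)"
    using a1 a2 sumt by (simp_all add: add.commute algebra_simps)
  hence "1 \<le> (cmod (A + t j))\<^sup>2" "1 \<le> (cmod (A - t j))\<^sup>2" by (simp_all add: one_le_power)
  moreover have "(cmod (A + t j))\<^sup>2 + (cmod (A - t j))\<^sup>2 = 2 * ?a\<^sup>2 + 2 * ?b\<^sup>2"
    by (simp only: cmod_power2) (simp add: power2_eq_square algebra_simps)
  moreover have "(?a + ?b)\<^sup>2 \<le> 1" using ab b0 norm_ge_zero[of A]
    by (metis add_nonneg_nonneg less_imp_le power_le_one)
  ultimately have "?a * ?b \<le> 0" by (simp add: power2_eq_square algebra_simps)
  hence "A = 0" using b0 by (simp add: mult_le_0_iff)
  hence b1: "?b = 1" and "S = 0" using a1 ab s sumc sumt AS by auto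
  hence "\<forall>k\<in>UNIV - {j}. cmod (t k) = 0"
    unfolding S_def by (subst sum_nonneg_eq_0_iff[symmetric]) auto
  thus ?thesis using b1 by auto
qed

locale absolute_normed =
  fixes N :: "real ^ 'n \<Rightarrow> real"
  assumes absolute: "absolute_norm N"
begin

abbreviation NC :: "complex ^ 'n \<Rightarrow> real" where
  "NC \<equiv> cplx_norm N"

lemma N_nonneg: "0 \<le> N x"
  using absolute by (simp add: absolute_norm_def)

lemma N_eq_0_iff: "N x = 0 \<longleftrightarrow> x = 0"
  using absolute by (simp add: absolute_norm_def)

lemma N_smult: "N (c *s x) = \<bar>c\<bar> * N x"
  using absolute by (simp add: absolute_norm_def)

lemma N_triangle: "N (x + y) \<le> N x + N y"
  using absolute by (simp add: absolute_norm_def)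

lemma N_axis: "N (axis i 1) = 1"
  using absolute by (simp add: absolute_norm_def)

lemma N_is_norm: "is_norm N"
  using N_smult N_triangle N_eq_0_iff by (simp add: is_norm_def scalar_mult_eq_scaleR)

lemma N_abs_cong:
  assumes "\<And>k. \<bar>a $ k\<bar> = \<bar>b $ k\<bar>" shows "N a = N b"
proof -
  have "(\<chi> k. \<bar>a $ k\<bar>) = (\<chi> k. \<bar>b $ k\<bar>)" using assms by simp
  thus ?thesis using absolute by (metis absolute_norm_def)
qed

lemma N_flip: "N (flip j x) = N x"
  by (rule N_abs_cong) simp

text \<open>Monotonicity of absolute norms, first in one coordinate: \<open>a\<close> is a convex
  combination of \<open>b\<close> and \<open>flip j b\<close>.\<close>

lemma N_mono_coordinate:
  assumes "\<And>k. k \<noteq> j \<Longrightarrow> a $ k = b $ k" "\<bar>a $ j\<bar> \<le> \<bar>b $ j\<bar>"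
  shows "N a \<le> N b"
proof (cases "b $ j = 0")
  case True
  have "a $ k = b $ k" for k using True assms by (cases "k = j") auto
  hence "a = b" by (simp add: vec_eq_iff)
  thus ?thesis by simp
next
  case False
  define t where "t = (1 + a $ j / b $ j) / 2"
  have "\<bar>a $ j / b $ j\<bar> \<le> 1" using assms(2) False by (simp add: abs_divide divide_le_eq_1)
  hence t: "0 \<le> t" "t \<le> 1" unfolding t_def abs_le_iff by auto
  have "a = (1 - t) *\<^sub>R flip j b + t *\<^sub>R b"
    unfolding vec_eq_iff using False assms(1) by (auto simp: t_def field_simps)
  hence "N a \<le> (1 - t) * N (flip j b) + t * N b"
    using is_norm_triangle[OF N_is_norm, of "(1 - t) *\<^sub>R flip j b" "t *\<^sub>R b"] t
    by (simp add: is_norm_scaleR[OF N_is_norm])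
  thus ?thesis by (simp add: N_flip algebra_simps)
qed

lemma N_mono_on:
  assumes "finite I" "\<And>k. \<bar>a $ k\<bar> \<le> \<bar>b $ k\<bar>" "\<And>k. k \<notin> I \<Longrightarrow> a $ k = b $ k"
  shows "N a \<le> N b"
  using assms
proof (induction I arbitrary: a b rule: finite_induct)
  case empty
  hence "a = b" by (simp add: vec_eq_iff)
  thus ?case by simp
next
  case (insert j I)
  define m where "m = (\<chi> k. if k = j then a $ k else b $ k)"
  have "N a \<le> N m" using insert.prems by (intro insert.IH) (auto simp: m_def)
  also have "N m \<le> N b" using insert.prems by (intro N_mono_coordinate[of j]) (auto simp: m_def)
  finally show ?case .
qed

lemma N_mono: "(\<And>k. \<bar>a $ k\<bar> \<le> \<bar>b $ k\<bar>) \<Longrightarrow> N a \<le> N b"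
  using N_mono_on[of UNIV] by auto

lemma N_component_le: "\<bar>x $ k\<bar> \<le> N x"
proof -
  have "N (\<bar>x $ k\<bar> *s axis k 1) \<le> N x" by (rule N_mono) (auto simp: axis_def)
  thus ?thesis by (simp add: N_smult N_axis)
qed

lemma NC_modv: "NC z = N (modv z)"
  by (simp add: cplx_norm_def modv_def)

lemma NC_abs_cong: "(\<And>k. cmod (z $ k) = \<bar>x $ k\<bar>) \<Longrightarrow> NC z = N x"
  unfolding NC_modv by (rule N_abs_cong) simp

lemma NC_cplx_of: "NC (cplx_of x) = N x"
  by (rule NC_abs_cong) simp

lemma NC_smult: "NC (c *s z) = cmod c * NC z"
proof -
  have "modv (c *s z) = cmod c *s modv z" by (simp add: vec_eq_iff norm_mult)
  thus ?thesis by (simp add: NC_modv N_smult)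
qed

lemma NC_rot: "(\<And>k. cmod (q k) = 1) \<Longrightarrow> NC (rot q z) = NC z"
  by (simp add: NC_modv norm_mult modv_def)

lemma NC_is_norm: "is_norm NC"
  unfolding is_norm_def
proof (intro conjI allI impI)
  fix c :: real and z w :: "complex ^ 'n"
  have "modv (c *\<^sub>R z) = \<bar>c\<bar> *s modv z" by (simp add: vec_eq_iff)
  thus "NC (c *\<^sub>R z) = \<bar>c\<bar> * NC z" by (simp add: NC_modv N_smult)
  have "N (modv (z + w)) \<le> N (modv z + modv w)" by (rule N_mono) (simp add: norm_triangle_ineq)
  thus "NC (z + w) \<le> NC z + NC w" using N_triangle[of "modv z" "modv w"] by (simp add: NC_modv)
  show "NC z = 0 \<Longrightarrow> z = 0" by (simp add: NC_modv N_eq_0_iff vec_eq_iff)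
qed

lemma NC_axis: "NC (cplx_of (axis i 1)) = 1"
  by (simp add: NC_cplx_of N_axis)

lemma NC_component_le: "cmod (z $ k) \<le> NC z"
  using N_component_le[of "modv z" k] by (simp add: NC_modv)

lemma compact_ball: "compact {v. N v \<le> 1}"
proof (rule is_norm_compact_ball[OF N_is_norm])
  show "0 \<le> N (\<chi> k. 1)" by (rule N_nonneg)
  fix v :: "real ^ 'n"
  have "N v \<le> N (norm v *s (\<chi> k. 1))" by (rule N_mono) (simp add: component_le_norm_cart)
  thus "N v \<le> N (\<chi> k. 1) * norm v" by (simp add: N_smult mult.commute)
  have "norm v \<le> (\<Sum>k\<in>UNIV. \<bar>v $ k\<bar>)" by (rule norm_le_l1_cart)
  also have "\<dots> \<le> (\<Sum>(k::'n)\<in>UNIV. N v)" by (intro sum_mono N_component_le)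
  finally show "norm v \<le> real CARD('n) * N v" by simp
qed

lemma compact_ballC: "compact {v. NC v \<le> 1}"
proof (rule is_norm_compact_ball[OF NC_is_norm])
  show "0 \<le> N (\<chi> k. 1)" by (rule N_nonneg)
  fix v :: "complex ^ 'n"
  have "N (modv v) \<le> N (norm v *s (\<chi> k. 1))"
    by (rule N_mono) (simp add: Finite_Cartesian_Product.norm_nth_le)
  thus "NC v \<le> N (\<chi> k. 1) * norm v" by (simp add: N_smult NC_modv mult.commute)
  have "norm v \<le> (\<Sum>k\<in>UNIV. norm (v $ k))" unfolding norm_vec_def by (rule L2_set_le_sum) simp
  also have "\<dots> \<le> (\<Sum>(k::'n)\<in>UNIV. NC v)" by (intro sum_mono NC_component_le)
  finally show "norm v \<le> real CARD('n) * NC v" by simp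
qed

end

context absolute_normed
begin

abbreviation extR :: "real ^ 'n \<Rightarrow> bool" where
  "extR x \<equiv> ext_pt {y. N y \<le> 1} x"

abbreviation extC :: "complex ^ 'n \<Rightarrow> bool" where
  "extC z \<equiv> ext_pt {y. NC y \<le> 1} z"

lemma extR_norm: "extR x \<Longrightarrow> N x = 1"
  by (rule ext_pt_unit_sphere[OF N_is_norm N_axis])

lemma extC_norm: "extC z \<Longrightarrow> NC z = 1"
  by (rule ext_pt_unit_sphere[OF NC_is_norm NC_axis])

text \<open>A real point that is extreme in the complex ball is extreme in the real ball,
  since \<open>cplx_of\<close> is a linear isometric embedding.\<close>

lemma extR_if_extC:
  assumes e: "extC (cplx_of x)" shows "extR x"
proof -
  have "x = y \<and> x = z" if yz: "N y \<le> 1" "N z \<le> 1" "y + z = 2 *\<^sub>R x" for y z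
  proof -
    interpret linear "cplx_of :: real ^ 'n \<Rightarrow> complex ^ 'n" by (rule linear_cplx_of)
    have "cplx_of y + cplx_of z = 2 *\<^sub>R cplx_of x" by (metis yz(3) add scale)
    moreover have "NC (cplx_of y) \<le> 1" "NC (cplx_of z) \<le> 1" using yz by (auto simp: NC_cplx_of)
    ultimately have "cplx_of x = cplx_of y \<and> cplx_of x = cplx_of z"
      using e unfolding ext_pt_def by blast
    thus ?thesis by (metis cplx_of_nth of_real_eq_iff vec_eq_iff)
  qed
  thus "extR x" using e by (auto simp: ext_pt_def NC_cplx_of)
qed

text \<open>Conversely, let \<open>x\<close> be real-extreme and \<open>y + z = 2x\<close> in the complex ball.  The
  real parts of \<open>y\<close>, \<open>z\<close> lie in the real ball, so \<open>Re y = x\<close>.  Giving \<open>|y|\<close> the signs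
  of \<open>x\<close> yields another decomposition of \<open>2x\<close> in the real ball, so \<open>|y\<^sub>k| = |x\<^sub>k|\<close>;
  hence \<open>y\<close> has no imaginary part and \<open>y = x\<close>.\<close>

lemma extR_midpoint_real:
  assumes x: "extR x" and y: "NC y \<le> 1" and z: "NC z \<le> 1" and yz: "y + z = 2 *\<^sub>R cplx_of x"
  shows "y = cplx_of x"
proof -
  have comp: "y $ k + z $ k = 2 * complex_of_real (x $ k)" for k
    using arg_cong[OF yz, of "\<lambda>v. v $ k"] by (simp add: scaleR_conv_of_real)
  have N_le_NC: "N (\<chi> k. f (w $ k)) \<le> NC w" if "\<And>c. \<bar>f c\<bar> \<le> cmod c" for f w
    unfolding NC_modv by (rule N_mono) (simp add: that)
  have re: "x = (\<chi> k. Re (y $ k))"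
  proof -
    have "(\<chi> k. Re (y $ k)) + (\<chi> k. Re (z $ k)) = 2 *\<^sub>R x"
      unfolding vec_eq_iff using comp by (simp add: complex_eq_iff)
    moreover have "N (\<chi> k. Re (y $ k)) \<le> 1" "N (\<chi> k. Re (z $ k)) \<le> 1"
      using N_le_NC[OF abs_Re_le_cmod, of y] N_le_NC[OF abs_Re_le_cmod, of z] y z by auto
    ultimately show ?thesis using x by (auto simp: ext_pt_def)
  qed
  have modulus: "cmod (y $ k) = \<bar>x $ k\<bar>" for k
  proof -
    define p where "p = (\<chi> k. if 0 \<le> x $ k then cmod (y $ k) else - cmod (y $ k))"
    have xle: "\<bar>x $ k\<bar> \<le> cmod (y $ k)" for k
      using abs_Re_le_cmod[of "y $ k"] re by (simp add: vec_eq_iff)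
    have "N p = NC y" unfolding NC_modv by (rule N_abs_cong) (simp add: p_def)
    moreover have "N (2 *\<^sub>R x - p) \<le> NC y"
      unfolding NC_modv using xle by (intro N_mono) (simp add: p_def abs_le_iff)
    ultimately have "p \<in> {v. N v \<le> 1}" "2 *\<^sub>R x - p \<in> {v. N v \<le> 1}" using y by auto
    moreover have "p + (2 *\<^sub>R x - p) = 2 *\<^sub>R x" by simp
    ultimately have "x = p" using x unfolding ext_pt_def by blast
    hence "x $ k = p $ k" by simp
    thus ?thesis by (cases "0 \<le> x $ k") (auto simp: p_def)
  qed
  have "y $ k = complex_of_real (x $ k)" for k
  proof -
    have "Re (y $ k) = x $ k" using re by (simp add: vec_eq_iff)
    moreover from this have "Im (y $ k) = 0" using modulus[of k] cmod_power2[of "y $ k"] by simp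
    ultimately show ?thesis by (simp add: complex_eq_iff)
  qed
  thus ?thesis by (simp add: vec_eq_iff)
qed

lemma extC_if_extR:
  assumes x: "extR x" shows "extC (cplx_of x)"
proof -
  have "cplx_of x = y \<and> cplx_of x = z"
    if "NC y \<le> 1" "NC z \<le> 1" "y + z = 2 *\<^sub>R cplx_of x" for y z
    using extR_midpoint_real[OF x that] extR_midpoint_real[OF x that(2,1)] that(3)
    by (simp add: add.commute)
  thus ?thesis using x by (auto simp: ext_pt_def NC_cplx_of)
qed

theorem extR_iff_extC: "extR x \<longleftrightarrow> extC (cplx_of x)"
  using extR_if_extC extC_if_extR by blast

lemma extR_flip: "extR x \<Longrightarrow> extR (flip j x)"
  by (rule ext_pt_linear_isometry[OF linear_flip[of j] linear_flip[of j]])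
    (simp_all add: vec_eq_iff N_flip)

lemma extC_rot:
  assumes q: "\<And>k. cmod (q k) = 1" and z: "extC z" shows "extC (rot q z)"
proof (rule ext_pt_linear_isometry[OF linear_rot[of q] linear_rot[of "\<lambda>k. cnj (q k)"] _ _ _ z])
  show "rot (\<lambda>k. cnj (q k)) (rot q v) = v" for v
    using q by (simp add: vec_eq_iff cnj_mult_unit mult.assoc[symmetric])
  show "rot q (rot (\<lambda>k. cnj (q k)) v) = v" for v
    using q by (simp add: vec_eq_iff cnj_mult_unit mult.assoc[symmetric] mult.commute[of "q _"])
  show "NC (rot q v) = NC v" for v using NC_rot q by simp
qed

lemma extR_modv:
  assumes "extC z" shows "extR (modv z)"
proof -
  have "rot (\<lambda>k. cnj (phase (z $ k))) z = cplx_of (modv z)"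
    by (simp add: vec_eq_iff cnj_phase_mult)
  thus ?thesis using extC_rot[of "\<lambda>k. cnj (phase (z $ k))" z] assms extR_iff_extC by simp
qed

end

text \<open>By Krein--Milman, the CL-property says that every extreme point of the unit
  ball is a unimodular multiple of a point of each maximal convex subset \<open>F\<close> of the
  unit sphere, i.e.\ lies in \<open>F\<close> or \<open>-F\<close> in the real case.\<close>

definition real_face_condition :: "(real ^ 'n \<Rightarrow> real) \<Rightarrow> bool" where
  "real_face_condition N \<longleftrightarrow> (\<forall>F. max_convex_subset {x. N x = 1} F \<longrightarrow>
     (\<forall>x. ext_pt {y. N y \<le> 1} x \<longrightarrow> x \<in> F \<or> - x \<in> F))"

definition complex_face_condition :: "(complex ^ 'n \<Rightarrow> real) \<Rightarrow> bool" where
  "complex_face_condition p \<longleftrightarrow> (\<forall>G. max_convex_subset {z. p z = 1} G \<longrightarrow>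
     (\<forall>z. ext_pt {w. p w \<le> 1} z \<longrightarrow> (\<exists>c. cmod c = 1 \<and> c *s z \<in> G)))"

context absolute_normed
begin

lemma convex_ball: "convex {v. N v \<le> 1}"
  by (intro convex_on_sublevel_le is_norm_convex_on N_is_norm)

lemma convex_ballC: "convex {v. NC v \<le> 1}"
  by (intro convex_on_sublevel_le is_norm_convex_on NC_is_norm)

text \<open>An extreme point has norm one, so it is a balanced multiple of a point of a
  subset \<open>F\<close> of the sphere only through a unimodular scalar.\<close>

lemma extR_mem_balanced_iff:
  assumes x: "extR x" and F: "F \<subseteq> {y. N y = 1}"
  shows "x \<in> {c *s y | c y. \<bar>c\<bar> \<le> 1 \<and> y \<in> F} \<longleftrightarrow> x \<in> F \<or> - x \<in> F"
proof
  assume "x \<in> {c *s y | c y. \<bar>c\<bar> \<le> 1 \<and> y \<in> F}"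
  then obtain c y where cy: "x = c *s y" "y \<in> F" by blast
  hence "\<bar>c\<bar> = 1" using extR_norm[OF x] F by (auto simp: N_smult)
  hence "c = 1 \<or> c = -1" by auto
  thus "x \<in> F \<or> - x \<in> F" using cy by (auto simp: scalar_mult_eq_scaleR)
next
  assume "x \<in> F \<or> - x \<in> F"
  moreover have "x = 1 *s x" "x = (-1) *s (- x)" by (simp_all add: scalar_mult_eq_scaleR)
  ultimately show "x \<in> {c *s y | c y. \<bar>c\<bar> \<le> 1 \<and> y \<in> F}"
    by (smt (verit) mem_Collect_eq)
qed

lemma extC_mem_balanced_iff:
  assumes z: "extC z" and G: "G \<subseteq> {w. NC w = 1}"
  shows "z \<in> {c *s w | c w. cmod c \<le> 1 \<and> w \<in> G} \<longleftrightarrow> (\<exists>c. cmod c = 1 \<and> c *s z \<in> G)"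
proof
  assume "z \<in> {c *s w | c w. cmod c \<le> 1 \<and> w \<in> G}"
  then obtain c w where cw: "z = c *s w" "w \<in> G" by blast
  hence c: "cmod c = 1" using extC_norm[OF z] G by (auto simp: NC_smult)
  hence "cnj c *s z = w" using cw(1) cnj_mult_unit[OF c] by (simp add: vector_smult_assoc)
  thus "\<exists>c. cmod c = 1 \<and> c *s z \<in> G" using c cw(2) by (metis complex_mod_cnj)
next
  assume "\<exists>c. cmod c = 1 \<and> c *s z \<in> G"
  then obtain c where c: "cmod c = 1" "c *s z \<in> G" by blast
  have "z = cnj c *s (c *s z)" using cnj_mult_unit[OF c(1)] by (simp add: vector_smult_assoc)
  moreover have "cmod (cnj c) \<le> 1" using c(1) by simp
  ultimately show "z \<in> {c *s w | c w. cmod c \<le> 1 \<and> w \<in> G}" using c(2) by blast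
qed

lemma real_CL_iff: "real_CL N \<longleftrightarrow> real_face_condition N"
proof -
  have "{y. N y \<le> 1} = real_aco F \<longleftrightarrow> (\<forall>x. extR x \<longrightarrow> x \<in> F \<or> - x \<in> F)"
    if F: "max_convex_subset {x. N x = 1} F" for F
  proof -
    let ?S = "{c *s y | c y. \<bar>c\<bar> \<le> 1 \<and> y \<in> F}"
    have sphere: "F \<subseteq> {y. N y = 1}" using F by (simp add: max_convex_subset_def)
    hence "?S \<subseteq> {y. N y \<le> 1}" by (auto simp: N_smult)
    hence "{y. N y \<le> 1} = real_aco F \<longleftrightarrow> {x. x extreme_point_of {y. N y \<le> 1}} \<subseteq> ?S"
      unfolding real_aco_def by (rule compact_convex_eq_hull_iff[OF compact_ball convex_ball])
    also have "\<dots> \<longleftrightarrow> (\<forall>x. extR x \<longrightarrow> x \<in> ?S)"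
      using ext_pt_iff_extreme_point[OF convex_ball] by blast
    also have "\<dots> \<longleftrightarrow> (\<forall>x. extR x \<longrightarrow> x \<in> F \<or> - x \<in> F)"
      using extR_mem_balanced_iff[OF _ sphere] by blast
    finally show ?thesis .
  qed
  thus ?thesis by (auto simp: real_CL_def real_face_condition_def)
qed

lemma complex_CL_iff: "complex_CL NC \<longleftrightarrow> complex_face_condition NC"
proof -
  have "{w. NC w \<le> 1} = complex_aco G \<longleftrightarrow> (\<forall>z. extC z \<longrightarrow> (\<exists>c. cmod c = 1 \<and> c *s z \<in> G))"
    if G: "max_convex_subset {w. NC w = 1} G" for G
  proof -
    let ?S = "{c *s w | c w. cmod c \<le> 1 \<and> w \<in> G}"
    have sphere: "G \<subseteq> {w. NC w = 1}" using G by (simp add: max_convex_subset_def)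
    hence "?S \<subseteq> {w. NC w \<le> 1}" by (auto simp: NC_smult)
    hence "{w. NC w \<le> 1} = complex_aco G \<longleftrightarrow> {z. z extreme_point_of {w. NC w \<le> 1}} \<subseteq> ?S"
      unfolding complex_aco_def by (rule compact_convex_eq_hull_iff[OF compact_ballC convex_ballC])
    also have "\<dots> \<longleftrightarrow> (\<forall>z. extC z \<longrightarrow> z \<in> ?S)"
      using ext_pt_iff_extreme_point[OF convex_ballC] by blast
    also have "\<dots> \<longleftrightarrow> (\<forall>z. extC z \<longrightarrow> (\<exists>c. cmod c = 1 \<and> c *s z \<in> G))"
      using extC_mem_balanced_iff[OF _ sphere] by blast
    finally show ?thesis .
  qed
  thus ?thesis by (auto simp: complex_CL_def complex_face_condition_def)
qed

end

definition lift :: "real ^ 'n \<Rightarrow> complex ^ 'n \<Rightarrow> complex ^ 'n" where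
  "lift h u = (\<chi> k. complex_of_real (h $ k) * phase (u $ k))"

lemma cnj_mult_phase: "cnj c * phase c = complex_of_real (cmod c)"
  using arg_cong[OF cnj_phase_mult[of c], of cnj] by (simp add: mult.commute)

lemma inner_lift_self: "inner u (lift h u) = inner (modv u) h"
  unfolding inner_vec_complex inner_vec_real
  by (intro sum.cong refl) (simp add: lift_def mult.left_commute[of "cnj _"] cnj_mult_phase)

lemma inner_lift_lift: "inner (lift f u) (lift h u) = inner f h"
  unfolding inner_vec_complex inner_vec_real
proof (intro sum.cong refl)
  fix k
  have "cnj (phase (u $ k)) * phase (u $ k) = 1" by (rule cnj_mult_unit) simp
  hence "cnj (lift f u $ k) * lift h u $ k = complex_of_real (f $ k * h $ k)"
    by (simp add: lift_def algebra_simps)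
  thus "Re (cnj (lift f u $ k) * lift h u $ k) = f $ k * h $ k" by simp
qed

context absolute_normed
begin

lemma NC_lift: "NC (lift h u) = N h"
  by (rule NC_abs_cong) (simp add: lift_def norm_mult)

text \<open>Since \<open>N\<close> is absolute, a dominated functional is also dominated after taking
  absolute values: test it on vectors whose signs (phases) match its own.\<close>

lemma dominated_real_abs_bound:
  assumes D: "dominated N f" shows "(\<Sum>k\<in>UNIV. \<bar>f $ k\<bar> * \<bar>y $ k\<bar>) \<le> N y"
proof -
  define w where "w = (\<chi> k. sgn (f $ k) * \<bar>y $ k\<bar>)"
  have "inner f w = (\<Sum>k\<in>UNIV. \<bar>f $ k\<bar> * \<bar>y $ k\<bar>)"
    unfolding inner_vec_real w_def by (intro sum.cong refl) (simp add: abs_sgn)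
  moreover have "N w \<le> N y" by (rule N_mono) (simp add: w_def abs_mult sgn_if)
  ultimately show ?thesis using D by (metis dominated_def order_trans)
qed

lemma dominated_complex_abs_bound:
  assumes D: "dominated NC u" shows "(\<Sum>k\<in>UNIV. cmod (u $ k) * \<bar>y $ k\<bar>) \<le> N y"
proof -
  have "inner u (lift (\<chi> k. \<bar>y $ k\<bar>) u) = (\<Sum>k\<in>UNIV. cmod (u $ k) * \<bar>y $ k\<bar>)"
    by (simp add: inner_lift_self inner_vec_real)
  moreover have "NC (lift (\<chi> k. \<bar>y $ k\<bar>) u) = N y" by (rule NC_abs_cong) (simp add: lift_def norm_mult)
  ultimately show ?thesis using D by (metis dominated_def)
qed

lemma dominated_modv:
  assumes D: "dominated NC u" shows "dominated N (modv u)"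
  unfolding dominated_def
proof
  fix y
  have "inner (modv u) y \<le> (\<Sum>k\<in>UNIV. cmod (u $ k) * \<bar>y $ k\<bar>)"
    unfolding inner_vec_real by (intro sum_mono) (simp add: mult_left_mono)
  also have "\<dots> \<le> N y" by (rule dominated_complex_abs_bound[OF D])
  finally show "inner (modv u) y \<le> N y" .
qed

lemma dominated_lift: "dominated N f \<Longrightarrow> dominated NC (lift f u)"
proof -
  assume D: "dominated N f"
  have "inner (lift f u) w \<le> NC w" for w
  proof -
    have "inner (lift f u) w \<le> (\<Sum>k\<in>UNIV. \<bar>f $ k\<bar> * \<bar>modv w $ k\<bar>)"
      unfolding inner_vec_complex
    proof (intro sum_mono)
      fix k
      have "Re (cnj (lift f u $ k) * w $ k) \<le> cmod (lift f u $ k) * cmod (w $ k)"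
        by (rule Re_cnj_mult_le)
      thus "Re (cnj (lift f u $ k) * w $ k) \<le> \<bar>f $ k\<bar> * \<bar>modv w $ k\<bar>"
        by (simp add: lift_def norm_mult)
    qed
    also have "\<dots> \<le> NC w" unfolding NC_modv by (rule dominated_real_abs_bound[OF D])
    finally show ?thesis .
  qed
  thus ?thesis by (simp add: dominated_def)
qed

text \<open>On the face exposed by a dominated \<open>u\<close>, all the terms \<open>cnj u\<^sub>k w\<^sub>k\<close> of
  \<open>inner u w\<close> are real and nonnegative, so the moduli \<open>|w|\<close> lie on the real face
  exposed by \<open>|u|\<close>.\<close>

lemma exposed_face_terms:
  assumes D: "dominated NC u" and w: "w \<in> exposed_face NC u"
  shows "cnj (u $ k) * w $ k = complex_of_real (cmod (u $ k) * cmod (w $ k))"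
    and "modv w \<in> exposed_face N (modv u)"
proof -
  have le: "Re (cnj (u $ k) * w $ k) \<le> cmod (u $ k) * cmod (w $ k)" for k
    by (rule Re_cnj_mult_le)
  have "(\<Sum>k\<in>UNIV. cmod (u $ k) * cmod (w $ k)) \<le> 1"
    using dominated_complex_abs_bound[OF D, of "modv w"] w by (simp add: exposed_face_def NC_modv)
  also have "1 = (\<Sum>k\<in>UNIV. Re (cnj (u $ k) * w $ k))"
    using w by (simp add: exposed_face_def inner_vec_complex)
  finally have eq: "Re (cnj (u $ k) * w $ k) = cmod (u $ k) * cmod (w $ k)" for k
    by (rule sum_eq_termwise[OF le])
  hence "Im (cnj (u $ k) * w $ k) = 0"
    using cmod_power2[of "cnj (u $ k) * w $ k"] by (simp add: norm_mult)
  thus "cnj (u $ k) * w $ k = complex_of_real (cmod (u $ k) * cmod (w $ k))"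
    using eq by (simp add: complex_eq_iff)
  have "inner (modv u) (modv w) = inner u w"
    unfolding inner_vec_real inner_vec_complex using eq by simp
  thus "modv w \<in> exposed_face N (modv u)"
    using w by (simp add: exposed_face_def NC_modv)
qed

lemma inner_lift_exposed_face:
  assumes D: "dominated NC u" and w: "w \<in> exposed_face NC u"
    and zero: "\<And>k. u $ k = 0 \<Longrightarrow> f $ k * cmod (w $ k) = 0"
  shows "inner (lift f u) w = inner f (modv w)"
  unfolding inner_vec_complex inner_vec_real
proof (intro sum.cong refl)
  fix k
  show "Re (cnj (lift f u $ k) * w $ k) = f $ k * modv w $ k"
  proof (cases "u $ k = 0")
    case True thus ?thesis using zero[OF True] by (auto simp: lift_def phase_def)
  next
    case False
    have "cnj (phase (u $ k)) * w $ k = cnj (u $ k) * w $ k / complex_of_real (cmod (u $ k))"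
      using False by (simp add: phase_def sgn_div_norm scaleR_conv_of_real field_simps)
    also have "\<dots> = complex_of_real (cmod (w $ k))"
      using False by (simp add: exposed_face_terms(1)[OF D w])
    finally show ?thesis by (simp add: lift_def mult.assoc)
  qed
qed

text \<open>A convex \<open>H\<close> in the real sphere
  containing the face of \<open>|u|\<close> is supported by some \<open>f\<close>; lifting \<open>f\<close> along the phases
  of \<open>u\<close> gives a functional whose face contains that of \<open>u\<close>, hence equals it by
  maximality, and lifting the points of \<open>H\<close> shows \<open>H\<close> lies in the face of \<open>|u|\<close>.\<close>

lemma maximal_exposed_face_modv:
  assumes D: "dominated NC u" and G: "max_convex_subset {w. NC w = 1} (exposed_face NC u)"
  shows "max_convex_subset {x. N x = 1} (exposed_face N (modv u))"
proof -
  let ?Fa = "exposed_face N (modv u)"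
  have "H = ?Fa" if H: "convex H" "H \<subseteq> {x. N x = 1}" "?Fa \<subseteq> H" for H
  proof (cases "H = {}")
    case True thus ?thesis using H by auto
  next
    case False
    obtain f where Df: "dominated N f" and fH: "H \<subseteq> exposed_face N f"
      using supporting_functional[OF N_is_norm H(1) False H(2)] by blast
    have ignores: "f $ k * y $ k = 0" if y: "y \<in> ?Fa" and uk: "u $ k = 0" for y k
    proof -
      have "flip k y \<in> ?Fa" using y uk by (simp add: exposed_face_def N_flip inner_flip)
      hence "inner f (flip k y) = 1" "inner f y = 1" using fH H(3) y by (auto simp: exposed_face_def)
      thus ?thesis by (simp add: inner_flip)
    qed
    have "exposed_face NC u \<subseteq> exposed_face NC (lift f u)"
    proof
      fix w assume w: "w \<in> exposed_face NC u"
      have mw: "modv w \<in> ?Fa" by (rule exposed_face_terms(2)[OF D w])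
      have "inner (lift f u) w = inner f (modv w)"
        using ignores[OF mw] by (intro inner_lift_exposed_face[OF D w]) simp
      also have "\<dots> = 1" using fH H(3) mw by (auto simp: exposed_face_def)
      finally show "w \<in> exposed_face NC (lift f u)" using w by (simp add: exposed_face_def)
    qed
    hence face_eq: "exposed_face NC (lift f u) = exposed_face NC u"
      by (rule exposed_face_eq_maximal[OF G NC_is_norm dominated_lift[OF Df]])
    have "h \<in> ?Fa" if h: "h \<in> H" for h
    proof -
      have "lift h u \<in> exposed_face NC (lift f u)"
        using fH H(2) h by (auto simp: exposed_face_def NC_lift inner_lift_lift)
      hence "lift h u \<in> exposed_face NC u" by (simp only: face_eq)
      hence "inner (modv u) h = 1" by (simp add: exposed_face_def inner_lift_self)
      thus ?thesis using H(2) h by (auto simp: exposed_face_def)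
    qed
    thus ?thesis using H(3) by blast
  qed
  moreover have "convex ?Fa" by (rule convex_exposed_face[OF N_is_norm])
  moreover have "?Fa \<subseteq> {x. N x = 1}"
    by (rule exposed_face_sphere[OF dominated_modv[OF D]])
  ultimately show ?thesis unfolding max_convex_subset_def by blast
qed

end

lemma inner_smult_complex:
  "inner u (c *s w) = Re (c * (\<Sum>k\<in>UNIV. cnj (u $ k) * w $ k))"
  unfolding inner_vec_complex by (simp add: sum_distrib_left mult.left_commute)

context absolute_normed
begin

text \<open>Since sign flips of an extreme point \<open>x\<close> are again
  extreme, \<open>sum_concentrated\<close> shows that this functional sees only one coordinate of
  \<open>x\<close>.\<close>

lemma extR_concentrated:
  fixes c :: "'n \<Rightarrow> complex"
  assumes bound: "\<And>y. (\<Sum>k\<in>UNIV. cmod (c k) * \<bar>y $ k\<bar>) \<le> N y"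
    and at_extreme: "\<And>y. extR y \<Longrightarrow> 1 \<le> cmod (\<Sum>k\<in>UNIV. c k * complex_of_real (y $ k))"
    and x: "extR x"
  obtains j where "cmod (c j) * \<bar>x $ j\<bar> = 1" "\<And>k. k \<noteq> j \<Longrightarrow> cmod (c k) * \<bar>x $ k\<bar> = 0"
proof -
  define t where "t k = c k * complex_of_real (x $ k)" for k
  have "(\<Sum>k\<in>UNIV. cmod (t k)) \<le> N x" using bound[of x] by (simp add: t_def norm_mult)
  hence st: "(\<Sum>k\<in>UNIV. cmod (t k)) \<le> 1" using x by (simp add: ext_pt_def)
  have s1: "1 \<le> cmod (\<Sum>k\<in>UNIV. t k)" using at_extreme[OF x] by (simp add: t_def)
  then obtain j where tj: "t j \<noteq> 0" by force
  have "(\<Sum>k\<in>UNIV. c k * complex_of_real (flip j x $ k)) = (\<Sum>k\<in>UNIV. t k - (if k = j then 2 * t j else 0))"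
    by (intro sum.cong refl) (auto simp: t_def)
  hence "1 \<le> cmod ((\<Sum>k\<in>UNIV. t k) - 2 * t j)"
    using at_extreme[OF extR_flip[OF x, of j]] by (simp add: sum_subtractf)
  from sum_concentrated[OF st s1 this tj] show thesis
    by (intro that[of j]) (auto simp: t_def norm_mult)
qed

text \<open>Given a maximal face
  \<open>G\<close> of the complex ball, exposed by \<open>u\<close>, and a complex extreme point \<open>z\<close>: \<open>|u|\<close>
  exposes a maximal real face, so \<open>|inner |u| y| = 1\<close> at all real extreme points \<open>y\<close>.
  Applied to \<open>x = |z|\<close>, concentration shows \<open>inner u z\<close> involves a single unimodular
  term, which a unimodular scalar rotates onto \<open>1\<close>.\<close>

lemma complex_face_condition_if_real:
  assumes P: "real_face_condition N" shows "complex_face_condition NC"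
  unfolding complex_face_condition_def
proof (intro allI impI)
  fix G z assume G: "max_convex_subset {x. NC x = 1} G" and z: "extC z"
  obtain u where Du: "dominated NC u" and Gu: "G = exposed_face NC u"
    using max_convex_subset_exposed[OF NC_is_norm NC_axis G] by blast
  have Fa: "max_convex_subset {x. N x = 1} (exposed_face N (modv u))"
    using maximal_exposed_face_modv[OF Du] G Gu by simp
  have bound: "(\<Sum>k\<in>UNIV. cmod (complex_of_real (cmod (u $ k))) * \<bar>y $ k\<bar>) \<le> N y" for y
    using dominated_complex_abs_bound[OF Du] by simp
  have "1 \<le> cmod (\<Sum>k\<in>UNIV. complex_of_real (cmod (u $ k)) * complex_of_real (y $ k))"
    if y: "extR y" for y
  proof -
    have "y \<in> exposed_face N (modv u) \<or> - y \<in> exposed_face N (modv u)"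
      using P Fa y unfolding real_face_condition_def by blast
    hence "\<bar>inner (modv u) y\<bar> = 1" by (auto simp: exposed_face_def)
    moreover have "(\<Sum>k\<in>UNIV. complex_of_real (cmod (u $ k)) * complex_of_real (y $ k))
        = complex_of_real (inner (modv u) y)" by (simp add: inner_vec_real)
    ultimately show ?thesis by simp
  qed
  from extR_concentrated[OF bound this extR_modv[OF z]]
  obtain j where j: "cmod (u $ j) * cmod (z $ j) = 1"
    and others: "\<And>k. k \<noteq> j \<Longrightarrow> cmod (u $ k) * cmod (z $ k) = 0"
    by auto
  define v where "v = cnj (u $ j) * z $ j"
  have v: "cmod v = 1" using j by (simp add: v_def norm_mult)
  have "(\<Sum>k\<in>UNIV. cnj (u $ k) * z $ k) = v"
    using sum.mono_neutral_right[of UNIV "{j}" "\<lambda>k. cnj (u $ k) * z $ k"] others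
    by (auto simp: v_def norm_mult)
  hence "inner u (cnj v *s z) = 1" using cnj_mult_unit[OF v] by (simp add: inner_smult_complex)
  moreover have "NC (cnj v *s z) \<le> 1" using z v by (simp add: NC_smult ext_pt_def)
  ultimately show "\<exists>c. cmod c = 1 \<and> c *s z \<in> G" using v Gu by (auto simp: exposed_face_def)
qed

end

text \<open>A complex functional \<open>u\<close> restricted to \<open>\<real>\<^sup>n\<close>: replacing each coordinate by its
  modulus with the sign of its real part gives a real functional, still dominated,
  which agrees with \<open>u\<close> on the real points of the face exposed by \<open>u\<close> (there \<open>u\<close> is
  real on the support of the point).\<close>

definition signed_modv :: "complex ^ 'n \<Rightarrow> real ^ 'n" where
  "signed_modv u = (\<chi> k. if Re (u $ k) < 0 then - cmod (u $ k) else cmod (u $ k))"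

lemma abs_signed_modv [simp]: "\<bar>signed_modv u $ k\<bar> = cmod (u $ k)"
  by (simp add: signed_modv_def)

context absolute_normed
begin

lemma dominated_signed_modv:
  assumes Du: "dominated NC u" shows "dominated N (signed_modv u)"
  unfolding dominated_def
proof
  fix w
  have "inner (signed_modv u) w \<le> (\<Sum>k\<in>UNIV. cmod (u $ k) * \<bar>w $ k\<bar>)"
    unfolding inner_vec_real
    using abs_ge_self[of "signed_modv u $ _ * w $ _"] by (intro sum_mono) (simp add: abs_mult)
  also have "\<dots> \<le> N w" by (rule dominated_complex_abs_bound[OF Du])
  finally show "inner (signed_modv u) w \<le> N w" .
qed

lemma inner_signed_modv_exposed_face:
  assumes Du: "dominated NC u" and w: "cplx_of y \<in> exposed_face NC u"
  shows "inner (signed_modv u) y = 1"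
proof -
  have "signed_modv u $ k * y $ k = cmod (u $ k) * \<bar>y $ k\<bar>" for k
  proof -
    have "cnj (u $ k) * complex_of_real (y $ k) = complex_of_real (cmod (u $ k) * \<bar>y $ k\<bar>)"
      using exposed_face_terms(1)[OF Du w, of k] by simp
    hence re: "Re (u $ k) * y $ k = cmod (u $ k) * \<bar>y $ k\<bar>" and im: "Im (u $ k) * y $ k = 0"
      by (simp_all add: complex_eq_iff)
    show ?thesis
    proof (cases "y $ k = 0")
      case False
      hence "Im (u $ k) = 0" using im by simp
      hence "signed_modv u $ k = Re (u $ k)" by (simp add: signed_modv_def cmod_def)
      thus ?thesis using re by simp
    qed simp
  qed
  hence "inner (signed_modv u) y = inner (modv u) (modv (cplx_of y))" by (simp add: inner_vec_real)
  also have "\<dots> = 1" using exposed_face_terms(2)[OF Du w] by (simp add: exposed_face_def)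
  finally show ?thesis .
qed

text \<open>Given a maximal real face
  \<open>F\<close> and a real extreme point \<open>x\<close>: \<open>F\<close> sits in a maximal complex face, exposed by
  some \<open>u\<close>.  On \<open>F\<close> the functional \<open>u\<close> is real, so the real functional \<open>h\<close> with
  \<open>|h\<^sub>k| = |u\<^sub>k|\<close> and the signs of \<open>Re u\<close> exposes \<open>F\<close>.  Concentration at \<open>x\<close> gives
  \<open>inner h x = \<plusminus>1\<close>, i.e.\ \<open>x \<in> F\<close> or \<open>-x \<in> F\<close>.\<close>

lemma real_face_condition_if_complex:
  assumes P: "complex_face_condition NC" shows "real_face_condition N"
  unfolding real_face_condition_def
proof (intro allI impI)
  fix F x assume F: "max_convex_subset {x. N x = 1} F" and x: "extR x"
  have cF: "convex F" "F \<subseteq> {x. N x = 1}" using F by (auto simp: max_convex_subset_def)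
  have "convex (cplx_of ` F)" by (rule convex_linear_image[OF linear_cplx_of cF(1)])
  moreover have "cplx_of ` F \<subseteq> {w. NC w = 1}" using cF(2) by (auto simp: NC_cplx_of)
  ultimately obtain G where G: "max_convex_subset {w. NC w = 1} G" "cplx_of ` F \<subseteq> G"
    using max_convex_subset_exists by blast
  obtain u where Du: "dominated NC u" and Gu: "G = exposed_face NC u"
    using max_convex_subset_exposed[OF NC_is_norm NC_axis G(1)] by blast
  define h where "h = signed_modv u"
  have h_abs: "\<bar>h $ k\<bar> = cmod (u $ k)" for k by (simp add: h_def)
  have "F \<subseteq> exposed_face N h"
    using inner_signed_modv_exposed_face[OF Du] cF(2) G(2) Gu by (auto simp: h_def exposed_face_def)
  moreover have "dominated N h" using dominated_signed_modv[OF Du] by (simp add: h_def)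
  ultimately have Fh: "exposed_face N h = F" using exposed_face_eq_maximal[OF F N_is_norm] by blast
  have bound: "(\<Sum>k\<in>UNIV. cmod (cnj (u $ k)) * \<bar>y $ k\<bar>) \<le> N y" for y
    using dominated_complex_abs_bound[OF Du] by simp
  have "1 \<le> cmod (\<Sum>k\<in>UNIV. cnj (u $ k) * complex_of_real (y $ k))" if y: "extR y" for y
  proof -
    obtain c where c: "cmod c = 1" "c *s cplx_of y \<in> G"
      using P G(1) extC_if_extR[OF y] unfolding complex_face_condition_def by blast
    hence "Re (c * (\<Sum>k\<in>UNIV. cnj (u $ k) * complex_of_real (y $ k))) = 1"
      using Gu by (simp add: exposed_face_def inner_smult_complex)
    hence "1 \<le> cmod (c * (\<Sum>k\<in>UNIV. cnj (u $ k) * complex_of_real (y $ k)))"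
      using complex_Re_le_cmod by metis
    thus ?thesis by (simp add: norm_mult c(1))
  qed
  from extR_concentrated[OF bound this x]
  obtain j where j: "cmod (u $ j) * \<bar>x $ j\<bar> = 1"
    and others: "\<And>k. k \<noteq> j \<Longrightarrow> cmod (u $ k) * \<bar>x $ k\<bar> = 0"
    by auto
  have "h $ k * x $ k = 0" if "k \<noteq> j" for k
  proof -
    have "\<bar>h $ k * x $ k\<bar> = 0" using others[OF that] by (simp only: abs_mult h_abs)
    thus ?thesis by simp
  qed
  hence "inner h x = h $ j * x $ j"
    using sum.mono_neutral_right[of UNIV "{j}" "\<lambda>k. h $ k * x $ k"] by (simp add: inner_vec_real)
  moreover have "\<bar>h $ j * x $ j\<bar> = 1" using j h_abs by (simp add: abs_mult)
  ultimately have "inner h x = 1 \<or> inner h (- x) = 1" by (auto simp: abs_if split: if_splits)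
  moreover have "N x \<le> 1" "N (- x) \<le> 1" using x is_norm_minus[OF N_is_norm, of x] by (auto simp: ext_pt_def)
  ultimately show "x \<in> F \<or> - x \<in> F" using Fh by (auto simp: exposed_face_def)
qed

end

theorem proposition4p3:
  fixes N :: "real ^ 'n \<Rightarrow> real"
  assumes "absolute_norm N"
  shows "(\<forall>x. ext_pt {y. N y \<le> 1} x \<longleftrightarrow> ext_pt {z. cplx_norm N z \<le> 1} (cplx_of x))
         \<and> (real_CL N \<longleftrightarrow> complex_CL (cplx_norm N))"
proof -
  interpret absolute_normed N using assms by unfold_locales
  have "real_face_condition N \<longleftrightarrow> complex_face_condition (cplx_norm N)"
    using real_face_condition_if_complex complex_face_condition_if_real by blast
  thus ?thesis using extR_iff_extC real_CL_iff complex_CL_iff by blast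
qed
end
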